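(* For a prime $p$ let $M_p=\{(n,p^a,np^a): n\in\mathbb{N},\ a\in\mathbb{N}\}$. There is a positive existential formula $\varphi(x,y,w)$ in the language $\{0,1,+,R\}$ such that for every prime $p$ and all $x,y,w\in\mathbb{N}$, the structure $\mathfrak{N}_p=(\mathbb{N};0,1,+,\mid_p)$ (with $R$ interpreted as $\mid_p$) satisfies $\varphi(x,y,w)$ if and only if $(x,y,w)\in M_p$.
   Context: $\mathbb{N}$ contains $0$. For a prime $p$, $x\mid_p y$ means $y=\pm xp^s$ for some $s\in\mathbb{Z}$. *)

theory Defs
  imports Complex_Main "HOL-Computational_Algebra.Primes"
begin

datatype tm = Var nat | Zero | One | Plus tm tm

datatype pefm = TrueF | FalseF | Eq tm tm | Rel tm tm
  | Conj pefm pefm | Disj pefm pefm | Ex nat pefm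

fun tval :: "(nat \<Rightarrow> nat) \<Rightarrow> tm \<Rightarrow> nat" where
  "tval e (Var i) = e i"
| "tval e Zero = 0"
| "tval e One = 1"
| "tval e (Plus s t) = tval e s + tval e t"

fun tvars :: "tm \<Rightarrow> nat set" where
  "tvars (Var i) = {i}"
| "tvars Zero = {}"
| "tvars One = {}"
| "tvars (Plus s t) = tvars s \<union> tvars t"

fun fvars :: "pefm \<Rightarrow> nat set" where
  "fvars TrueF = {}"
| "fvars FalseF = {}"
| "fvars (Eq s t) = tvars s \<union> tvars t"
| "fvars (Rel s t) = tvars s \<union> tvars t"
| "fvars (Conj f g) = fvars f \<union> fvars g"
| "fvars (Disj f g) = fvars f \<union> fvars g"
| "fvars (Ex v f) = fvars f - {v}"

fun sat :: "(nat \<Rightarrow> nat \<Rightarrow> bool) \<Rightarrow> (nat \<Rightarrow> nat) \<Rightarrow> pefm \<Rightarrow> bool" where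
  "sat R e TrueF = True"
| "sat R e FalseF = False"
| "sat R e (Eq s t) = (tval e s = tval e t)"
| "sat R e (Rel s t) = R (tval e s) (tval e t)"
| "sat R e (Conj f g) = (sat R e f \<and> sat R e g)"
| "sat R e (Disj f g) = (sat R e f \<or> sat R e g)"
| "sat R e (Ex v f) = (\<exists>n. sat R (e(v := n)) f)"

definition divp :: "nat \<Rightarrow> nat \<Rightarrow> nat \<Rightarrow> bool" where
  "divp p x y \<longleftrightarrow> (\<exists>s::int. real y = real x * real p powi s \<or> real y = - (real x * real p powi s))"

definition Mp :: "nat \<Rightarrow> (nat \<times> nat \<times> nat) set" where
  "Mp p = {(n, p ^ a, n * p ^ a) | n a. True}"

end

theory Submission
  imports Defs
begin

text \<open>
  Take \<open>\<phi>(x, y, w)\<close> to be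
  \<open>(x = 0 \<and> w = 0 \<and> 1 |\<^sub>p y) \<or> (1 |\<^sub>p y \<and> x |\<^sub>p w \<and> x + 1 |\<^sub>p w + y \<and> y \<le> w)\<close>.
  The condition \<open>1 |\<^sub>p y\<close> says \<open>y = p\<^sup>a\<close>, and \<open>x |\<^sub>p w\<close> says \<open>w = x p\<^sup>e\<close> or \<open>x = w p\<^sup>e\<close>.
  The last two conjuncts force \<open>w = x p\<^sup>a\<close>: otherwise, after cancelling a power of \<open>p\<close>,
  \<open>x + 1\<close> would be \<open>p\<close>-associated to a different number \<open>u\<close> such that either the larger
  of \<open>x + 1\<close> and \<open>u\<close> is prime to \<open>p\<close>, or \<open>u\<close> lies strictly between \<open>x + 1\<close> and
  \<open>p (x + 1)\<close>; but of two distinct associated numbers the larger is a multiple of \<open>p\<close> and at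
  least \<open>p\<close> times the smaller. The first disjunct covers \<open>x = 0\<close>, where \<open>y \<le> w\<close> fails.
\<close>

lemma divp_iff_powi:
  fixes p a b :: nat
  assumes "0 < p"
  shows "divp p a b \<longleftrightarrow> (\<exists>s::int. real b = real a * real p powi s)"
proof -
  have "real b = real a * real p powi s"
    if "real b = - (real a * real p powi s)" for s :: int
  proof -
    have "real a * real p powi s \<ge> 0"
      using assms by simp
    with that show ?thesis
      by (metis neg_0_le_iff_le of_nat_0_le_iff order_antisym minus_zero)
  qed
  then show ?thesis
    unfolding divp_def by blast
qed

lemma divp_iff:
  fixes p a b :: nat
  assumes "0 < p"
  shows "divp p a b \<longleftrightarrow> (\<exists>e. b = a * p ^ e \<or> a = b * p ^ e)"
proof
  assume "divp p a b"
  then obtain s :: int where b: "real b = real a * real p powi s"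
    using assms divp_iff_powi by blast
  show "\<exists>e. b = a * p ^ e \<or> a = b * p ^ e"
  proof (cases "s \<ge> 0")
    case True
    with b have "real b = real (a * p ^ nat s)"
      by (simp add: power_int_def)
    then show ?thesis
      by (metis of_nat_eq_iff)
  next
    case False
    with b assms have "real a = real (b * p ^ nat (- s))"
      by (simp add: power_int_def power_inverse field_simps)
    then show ?thesis
      by (metis of_nat_eq_iff)
  qed
next
  assume "\<exists>e. b = a * p ^ e \<or> a = b * p ^ e"
  then obtain e where "b = a * p ^ e \<or> a = b * p ^ e" by blast
  then have "real b = real a * real p powi int e \<or> real b = real a * real p powi - int e"
    using assms by (auto simp: power_int_minus field_simps)
  then show "divp p a b"
    using assms divp_iff_powi by blast
qed

lemma divp_commute: "0 < p \<Longrightarrow> divp p a b \<longleftrightarrow> divp p b a"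
  by (auto simp: divp_iff)

lemma divp_zero_left_iff: "0 < p \<Longrightarrow> divp p 0 b \<longleftrightarrow> b = 0"
  by (auto simp: divp_iff)

lemma divp_one_left_iff: "0 < p \<Longrightarrow> divp p 1 b \<longleftrightarrow> (\<exists>e. b = p ^ e)"
  by (auto simp: divp_iff) (metis One_nat_def power_0)

lemma divp_mult_pow_right_iff:
  fixes p a b :: nat
  assumes "0 < p"
  shows "divp p a (b * p ^ k) \<longleftrightarrow> divp p a b"
proof -
  have "real b * real p ^ k = real a * real p powi s \<longleftrightarrow>
      real b = real a * real p powi (s - int k)" for s :: int
    using assms by (auto simp: power_int_diff field_simps)
  then show ?thesis
    using assms unfolding divp_iff_powi[OF assms] of_nat_mult of_nat_power
    by (metis add_diff_cancel_right')
qed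

lemma divp_lessD:
  fixes p u v :: nat
  assumes "1 < p" "divp p u v" "u < v"
  shows "p * u \<le> v" and "p dvd v"
proof -
  obtain e where "v = u * p ^ e \<or> u = v * p ^ e"
    using assms divp_iff by auto
  moreover have "v \<le> v * p ^ e"
    using assms(1) by simp
  ultimately have v: "v = u * p ^ e"
    using assms(3) by auto
  with assms(3) have "e \<noteq> 0"
    by (cases e) auto
  then obtain f where "e = Suc f"
    using not0_implies_Suc by blast
  with v have "v = p * (u * p ^ f)"
    by simp
  moreover have "u \<le> u * p ^ f"
    using assms(1) by simp
  ultimately show "p * u \<le> v" and "p dvd v"
    by simp_all
qed

lemma not_divp_less_dvd_add_one:
  fixes p u m :: nat
  assumes p: "1 < p" and "p dvd m" and "u < m + 1"
  shows "\<not> divp p u (m + 1)"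
proof
  assume "divp p u (m + 1)"
  from divp_lessD(2)[OF p this \<open>u < m + 1\<close>] have "p dvd m + 1" .
  with \<open>p dvd m\<close> have "p dvd 1"
    by (metis dvd_add_right_iff)
  with p show False
    by simp
qed

lemma not_divp_strictly_between:
  fixes p u v :: nat
  assumes "1 < p" and "u < v" and "v < p * u"
  shows "\<not> divp p u v"
proof
  assume "divp p u v"
  from divp_lessD(1)[OF assms(1) this assms(2)] assms(3) show False
    by simp
qed

lemma not_divp_mult_pow_add_pow_if_less:
  fixes p x a e :: nat
  assumes p: "1 < p" and "0 < x" and "a < e"
  shows "\<not> divp p (x + 1) (x * p ^ e + p ^ a)"
proof
  obtain d where e: "e = a + d" and "0 < d"
    using \<open>a < e\<close> by (metis less_imp_add_positive)
  have p0: "0 < p"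
    using p by simp
  assume "divp p (x + 1) (x * p ^ e + p ^ a)"
  then have "divp p (x + 1) ((x * p ^ d + 1) * p ^ a)"
    by (simp add: e power_add algebra_simps)
  then have "divp p (x + 1) (x * p ^ d + 1)"
    by (rule divp_mult_pow_right_iff[OF p0, THEN iffD1])
  moreover have "x + 1 < x * p ^ d + 1"
  proof -
    have "1 < p ^ d"
      using p \<open>0 < d\<close> by (simp add: one_less_power del: One_nat_def)
    with \<open>0 < x\<close> show ?thesis
      by simp
  qed
  moreover have "p dvd x * p ^ d"
    using \<open>0 < d\<close> by simp
  ultimately show False
    using not_divp_less_dvd_add_one[OF p] by blast
qed

lemma not_divp_mult_pow_add_pow_if_greater:
  fixes p x a e :: nat
  assumes p: "1 < p" and "e < a" and le: "p ^ a \<le> x * p ^ e"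
  shows "\<not> divp p (x + 1) (x * p ^ e + p ^ a)"
proof
  obtain d where a: "a = e + d" and "0 < d"
    using \<open>e < a\<close> by (metis less_imp_add_positive)
  have p0: "0 < p"
    using p by simp
  assume "divp p (x + 1) (x * p ^ e + p ^ a)"
  then have "divp p (x + 1) ((x + p ^ d) * p ^ e)"
    by (simp add: a power_add algebra_simps)
  then have "divp p (x + 1) (x + p ^ d)"
    by (rule divp_mult_pow_right_iff[OF p0, THEN iffD1])
  moreover have "x + 1 < x + p ^ d"
    using p \<open>0 < d\<close> by (simp add: one_less_power del: One_nat_def)
  moreover have "x + p ^ d < p * (x + 1)"
  proof -
    have "p ^ d * p ^ e \<le> x * p ^ e"
      using le by (simp add: a power_add mult.commute)
    with p0 have "x + p ^ d \<le> 2 * x"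
      by simp
    also have "\<dots> < 2 * (x + 1)"
      by simp
    also have "\<dots> \<le> p * (x + 1)"
      using p by (intro mult_le_mono1) simp
    finally show ?thesis .
  qed
  ultimately show False
    using not_divp_strictly_between[OF p] by blast
qed

lemma divp_add_pow_imp_eq_mult_pow:
  fixes p x w a :: nat
  assumes p: "1 < p" and le: "p ^ a \<le> w"
    and xw: "divp p x w" and sum: "divp p (x + 1) (w + p ^ a)"
  shows "w = x * p ^ a"
proof -
  have p0: "0 < p"
    using p by simp
  have "0 < w"
    using le p0 by (meson less_le_trans zero_less_power)
  with xw p0 have "0 < x"
    by (cases "x = 0") (simp_all add: divp_zero_left_iff)
  obtain e where "w = x * p ^ e \<or> x = w * p ^ e"
    using xw p0 divp_iff by auto
  then consider (up) e where "w = x * p ^ e" | (down) e where "x = w * p ^ e" "0 < e"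
    by (metis neq0_conv mult_1_right power_0)
  then show ?thesis
  proof cases
    case (up e)
    with p le sum \<open>0 < x\<close> have "e = a"
      using not_divp_mult_pow_add_pow_if_less not_divp_mult_pow_add_pow_if_greater
      by (metis linorder_neqE_nat)
    with up show ?thesis
      by simp
  next
    case (down e)
    have "w + p ^ a \<le> 2 * w"
      using le by simp
    also have "\<dots> \<le> p * w"
      using p by simp
    also have "\<dots> \<le> w * p ^ e"
      using down p by (simp add: self_le_power)
    finally have "w + p ^ a < x + 1"
      using down by simp
    moreover have "p dvd x"
      using down by (simp add: dvd_power)
    ultimately have "\<not> divp p (w + p ^ a) (x + 1)"
      by (intro not_divp_less_dvd_add_one[OF p])
    with sum p0 show ?thesis
      by (simp add: divp_commute)
  qed
qed

lemma mem_Mp_iff: "(x, y, w) \<in> Mp p \<longleftrightarrow> (\<exists>a. y = p ^ a \<and> w = x * p ^ a)"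
  by (auto simp: Mp_def)

lemma mem_Mp_iff_divp:
  fixes p x y w :: nat
  assumes p: "1 < p"
  shows "(x, y, w) \<in> Mp p \<longleftrightarrow>
    (x = 0 \<and> w = 0 \<and> divp p 1 y) \<or>
    (divp p 1 y \<and> divp p x w \<and> divp p (x + 1) (w + y) \<and> y \<le> w)"
    (is "_ \<longleftrightarrow> ?zero \<or> ?pos")
proof -
  have p0: "0 < p"
    using p by simp
  show ?thesis
  proof
    assume "(x, y, w) \<in> Mp p"
    then obtain a where y: "y = p ^ a" and w: "w = x * p ^ a"
      by (auto simp: mem_Mp_iff)
    show "?zero \<or> ?pos"
    proof (cases "x = 0")
      case True
      with y w p0 show ?thesis
        by (auto simp: divp_iff)
    next
      case False
      have "divp p x w" and "divp p (x + 1) (w + y)"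
        using y w p0 by (auto simp: divp_iff algebra_simps)
      moreover have "y \<le> w"
        using y w False by simp
      moreover have "divp p 1 y"
        using y p0 divp_one_left_iff by blast
      ultimately show ?thesis
        by blast
    qed
  next
    assume "?zero \<or> ?pos"
    moreover obtain a where "y = p ^ a" if "divp p 1 y"
      using p0 divp_one_left_iff by blast
    ultimately show "(x, y, w) \<in> Mp p"
      using divp_add_pow_imp_eq_mult_pow[OF p, of a w x] by (auto simp: mem_Mp_iff)
  qed
qed

definition Mp_formula :: pefm where
  "Mp_formula =
    Disj (Conj (Eq (Var 0) Zero) (Conj (Eq (Var 2) Zero) (Rel One (Var 1))))
      (Conj (Rel One (Var 1)) (Conj (Rel (Var 0) (Var 2))
        (Conj (Rel (Plus (Var 0) One) (Plus (Var 2) (Var 1)))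
          (Ex 3 (Eq (Var 2) (Plus (Var 1) (Var 3)))))))"

lemma fvars_Mp_formula: "fvars Mp_formula \<subseteq> {0, 1, 2}"
  by (auto simp: Mp_formula_def)

lemma sat_Mp_formula_iff:
  "sat R e Mp_formula \<longleftrightarrow>
    (e 0 = 0 \<and> e 2 = 0 \<and> R 1 (e 1)) \<or>
    (R 1 (e 1) \<and> R (e 0) (e 2) \<and> R (e 0 + 1) (e 2 + e 1) \<and> e 1 \<le> e 2)"
  by (auto simp: Mp_formula_def le_iff_add)

theorem lemma4p7:
  shows "\<exists>\<phi>::pefm. fvars \<phi> \<subseteq> {0, 1, 2} \<and>
    (\<forall>p::nat. prime p \<longrightarrow> (\<forall>x y w :: nat. \<forall>e :: nat \<Rightarrow> nat.
       e 0 = x \<longrightarrow> e 1 = y \<longrightarrow> e 2 = w \<longrightarrow>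
       (sat (divp p) e \<phi> \<longleftrightarrow> (x, y, w) \<in> Mp p)))"
proof (intro exI[of _ Mp_formula] conjI allI impI)
  show "fvars Mp_formula \<subseteq> {0, 1, 2}"
    by (rule fvars_Mp_formula)
next
  fix p x y w :: nat and e :: "nat \<Rightarrow> nat"
  assume "prime p" and e: "e 0 = x" "e 1 = y" "e 2 = w"
  from \<open>prime p\<close> have "1 < p"
    by (rule prime_gt_1_nat)
  show "sat (divp p) e Mp_formula \<longleftrightarrow> (x, y, w) \<in> Mp p"
    unfolding sat_Mp_formula_iff mem_Mp_iff_divp[OF \<open>1 < p\<close>] e by simp
qed

end
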